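(* Let $k>0$. For any $m$-dimensional bodies $A,B$ with $B\subseteq A$ and $A$ downwards closed, there exists a downwards closed body $\tilde B\subseteq A$ with $\delta_k(\tilde B)\ge\delta_k(B)$.
   Context: An $m$-dimensional body is a compact subset of $\mathbb R_+^m$. A body $A$ is downwards closed if $\mathbf y\in A$ whenever $\mathbf y\in\mathbb R_+^m$ and $\mathbf y\le\mathbf x$ coordinatewise for some $\mathbf x\in A$. The $k$-deficiency is $\delta_k(A)=|A|-k\sum_{j=1}^m|A_{[m]\setminus\{j\}}|$, where $A_{[m]\setminus\{j\}}=\{\mathbf x_{-j}:\mathbf x\in A\}$ and $|\cdot|$ is Lebesgue measure in the relevant dimension. *)

theory Defs
  imports "HOL-Analysis.Analysis"
begin

text \<open>Points of the m-dimensional space are represented as extensional functions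
  on the index set {..<m} (coordinates 0..m-1), i.e. elements of
  PiE {..<m} (\<lambda>_. UNIV); Lebesgue measure on R^I is the product measure
  PiM I (\<lambda>_. lborel).\<close>

definition lebI :: "nat set \<Rightarrow> (nat \<Rightarrow> real) set \<Rightarrow> real" where
  "lebI I S = measure (PiM I (\<lambda>_. lborel)) S"

definition nonneg_orthant :: "nat \<Rightarrow> (nat \<Rightarrow> real) set" where
  "nonneg_orthant m = PiE {..<m} (\<lambda>_. {0..})"

definition body :: "nat \<Rightarrow> (nat \<Rightarrow> real) set \<Rightarrow> bool" where
  "body m A \<longleftrightarrow> compact A \<and> A \<subseteq> nonneg_orthant m"

definition down_closed :: "nat \<Rightarrow> (nat \<Rightarrow> real) set \<Rightarrow> bool" where
  "down_closed m A \<longleftrightarrow>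
     (\<forall>x\<in>A. \<forall>y\<in>nonneg_orthant m. (\<forall>i<m. y i \<le> x i) \<longrightarrow> y \<in> A)"

definition proj_drop :: "nat \<Rightarrow> nat \<Rightarrow> (nat \<Rightarrow> real) set \<Rightarrow> (nat \<Rightarrow> real) set" where
  "proj_drop m j A = (\<lambda>x. restrict x ({..<m} - {j})) ` A"

definition deficiency :: "real \<Rightarrow> nat \<Rightarrow> (nat \<Rightarrow> real) set \<Rightarrow> real" where
  "deficiency k m A =
     lebI {..<m} A - k * (\<Sum>j<m. lebI ({..<m} - {j}) (proj_drop m j A))"

end

theory Submission
  imports Defs
begin

text \<open>Compress B one coordinate at a time. Compressing in direction i replaces the fibre of B over
  each point of the hyperplane x_i = 0 by the interval [0, l], where l is the length of that fibre;
  by Fubini this preserves the volume. For j \<noteq> i, the fibres in direction i of the projection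
  along j become intervals whose lengths are those of fibres of B, each contained in the
  corresponding fibre of the projection of B, so projected volumes do not increase and, as k \<ge> 0,
  the deficiency does not decrease. Upper semicontinuity of the fibre length keeps the compression
  compact, down-closedness of A keeps it inside A, and compressing in direction i preserves
  down-closedness in the other directions, so after compressing in all m directions the body is
  down-closed.\<close>

section \<open>Fibres\<close>

lemma continuous_on_fun_upd [continuous_intros]:
  fixes f :: "'a::topological_space \<Rightarrow> 'b \<Rightarrow> 'c::topological_space"
  assumes "continuous_on S f" "continuous_on S g"
  shows "continuous_on S (\<lambda>z. (f z)(i := g z))"
proof (rule continuous_on_coordinatewise_then_product)
  fix j
  show "continuous_on S (\<lambda>z. ((f z)(i := g z)) j)"
    using assms(2) continuous_on_product_then_coordinatewise[OF assms(1), of j]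
    by (cases "j = i") auto
qed

lemma continuous_on_restrict_comp [continuous_intros]:
  fixes f :: "'a::topological_space \<Rightarrow> 'b \<Rightarrow> 'c::topological_space"
  assumes "continuous_on S f"
  shows "continuous_on S (\<lambda>z. restrict (f z) J)"
proof (rule continuous_on_coordinatewise_then_product)
  fix j
  show "continuous_on S (\<lambda>z. restrict (f z) J j)"
    using continuous_on_product_then_coordinatewise[OF assms, of j] by (cases "j \<in> J") auto
qed

lemma compact_coordinate_image:
  fixes K :: "('a \<Rightarrow> 'b::topological_space) set"
  shows "compact K \<Longrightarrow> compact ((\<lambda>w. w i) ` K)"
  by (intro compact_continuous_image continuous_on_subset[OF continuous_on_product_coordinates] subset_UNIV)

definition fibre :: "nat \<Rightarrow> (nat \<Rightarrow> real) set \<Rightarrow> (nat \<Rightarrow> real) \<Rightarrow> real set" where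
  "fibre i S x = {y. x(i := y) \<in> S}"

definition fibre_length :: "nat \<Rightarrow> (nat \<Rightarrow> real) set \<Rightarrow> (nat \<Rightarrow> real) \<Rightarrow> real" where
  "fibre_length i S x = measure lborel (fibre i S x)"

lemma fibre_subset_coordinate_image: "fibre i K x \<subseteq> (\<lambda>w. w i) ` K"
  by (auto simp: fibre_def image_iff intro!: bexI[of _ "x(i := _)"])

lemma compact_fibre:
  assumes "compact K"
  shows "compact (fibre i K x)"
proof -
  have "closed ((\<lambda>y. x(i := y)) -` K)"
    using continuous_on_fun_upd[OF continuous_on_const continuous_on_id, of UNIV x i] assms
    by (intro closed_vimage compact_imp_closed)
  moreover have "compact ((\<lambda>w. w i) ` K)"
    using assms by (rule compact_coordinate_image)
  moreover have "fibre i K x = (\<lambda>y. x(i := y)) -` K \<inter> (\<lambda>w. w i) ` K"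
    using fibre_subset_coordinate_image[of i K x] by (auto simp: fibre_def)
  ultimately show ?thesis
    by (simp add: closed_Int_compact)
qed

lemma emeasure_fibre:
  assumes "compact K"
  shows "emeasure lborel (fibre i K x) = ennreal (fibre_length i K x)"
  unfolding fibre_length_def
  using fmeasurable_compact[OF compact_fibre[OF assms]] by (simp add: emeasure_eq_measure2)

lemma fibre_length_le_measure:
  assumes "compact K" "fibre i K x \<subseteq> T" "T \<in> fmeasurable lborel"
  shows "fibre_length i K x \<le> measure lborel T"
  unfolding fibre_length_def
  using assms borel_compact[OF compact_fibre[OF assms(1)]]
  by (intro measure_mono_fmeasurable) auto

lemma fibre_length_mono:
  assumes "compact K" "compact K'" "fibre i K x \<subseteq> fibre i K' x'"
  shows "fibre_length i K x \<le> fibre_length i K' x'"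
  unfolding fibre_length_def[of i K' x']
  using assms by (intro fibre_length_le_measure fmeasurable_compact compact_fibre)

lemma eventually_fibre_subset_open:
  fixes X :: "nat \<Rightarrow> nat \<Rightarrow> real"
  assumes K: "compact K" and X: "X \<longlonglongrightarrow> x" and U: "open U" "fibre i K x \<subseteq> U"
  shows "eventually (\<lambda>n. fibre i K (X n) \<subseteq> U) sequentially"
proof -
  \<comment> \<open>Base points (i-th coordinate zeroed) of the points of K outside the cylinder over U;
    this set is compact and misses the base point of x.\<close>
  define H where "H = (\<lambda>w. w(i := 0)) ` (K - (\<lambda>w. w i) -` U)"
  have "open ((\<lambda>w::nat \<Rightarrow> real. w i) -` U)"
    using U(1) by (intro open_vimage continuous_on_product_coordinates)
  then have "compact H"
    unfolding H_def using K by (intro compact_continuous_image compact_diff) (intro continuous_intros)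
  moreover have "x(i := 0) \<notin> H"
  proof
    assume "x(i := 0) \<in> H"
    then obtain w where w: "w \<in> K" "w i \<notin> U" "w(i := 0) = x(i := 0)"
      unfolding H_def by auto
    then have "x(i := w i) = w"
      by (metis fun_upd_triv fun_upd_upd)
    then have "w i \<in> fibre i K x"
      using w(1) by (simp add: fibre_def)
    with w(2) U(2) show False
      by blast
  qed
  moreover have "(\<lambda>n. (X n)(i := 0)) \<longlonglongrightarrow> x(i := 0)"
    by (rule continuous_on_tendsto_compose[OF continuous_on_fun_upd[OF continuous_on_id continuous_on_const, of UNIV] X])
      auto
  ultimately have "eventually (\<lambda>n. (X n)(i := 0) \<notin> H) sequentially"
    by (intro topological_tendstoD[where S = "- H", simplified]) (auto intro: compact_imp_closed)
  then show ?thesis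
  proof (rule eventually_mono)
    fix n
    assume "(X n)(i := 0) \<notin> H"
    then have "(X n)(i := y) \<notin> K - (\<lambda>w. w i) -` U" for y
      unfolding H_def by (metis fun_upd_upd image_eqI)
    then show "fibre i K (X n) \<subseteq> U"
      by (auto simp: fibre_def)
  qed
qed

lemma eventually_fibre_length_less:
  fixes X :: "nat \<Rightarrow> nat \<Rightarrow> real"
  assumes K: "compact K" and X: "X \<longlonglongrightarrow> x" and e: "e > 0"
  shows "eventually (\<lambda>n. fibre_length i K (X n) < fibre_length i K x + e) sequentially"
proof -
  let ?F = "fibre i K x"
  have F: "?F \<in> sets borel"
    using K by (simp add: borel_compact compact_fibre)
  obtain U where U: "open U" "?F \<subseteq> U" "emeasure lborel (U - ?F) < e"
    using outer_regular_lborel[OF F e] .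
  show ?thesis
    using eventually_fibre_subset_open[OF K X U(1,2)]
  proof (rule eventually_mono)
    fix n
    assume sub: "fibre i K (X n) \<subseteq> U"
    have "ennreal (fibre_length i K (X n)) = emeasure lborel (fibre i K (X n))"
      by (simp add: emeasure_fibre[OF K])
    also have "\<dots> \<le> emeasure lborel (?F \<union> (U - ?F))"
      using sub F U(1) by (intro emeasure_mono) auto
    also have "\<dots> \<le> emeasure lborel ?F + emeasure lborel (U - ?F)"
      using F U(1) by (intro emeasure_subadditive) auto
    also have "\<dots> < ennreal (fibre_length i K x) + ennreal e"
      using U(3) by (simp add: emeasure_fibre[OF K])
    also have "\<dots> = ennreal (fibre_length i K x + e)"
      using e by (simp add: ennreal_plus fibre_length_def)
    finally show "fibre_length i K (X n) < fibre_length i K x + e"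
      by (meson ennreal_leI not_le)
  qed
qed

lemma fibre_length_limit_le:
  fixes X :: "nat \<Rightarrow> nat \<Rightarrow> real"
  assumes K: "compact K" and X: "X \<longlonglongrightarrow> x" and Y: "Y \<longlonglongrightarrow> y"
    and le: "\<And>n. Y n \<le> fibre_length i K (X n)"
  shows "y \<le> fibre_length i K x"
proof (rule field_le_epsilon)
  fix e :: real
  assume "e > 0"
  have "eventually (\<lambda>n. fibre_length i K (X n) < fibre_length i K x + e) sequentially"
    by (rule eventually_fibre_length_less[OF K X \<open>e > 0\<close>])
  then have "eventually (\<lambda>n. Y n \<le> fibre_length i K x + e) sequentially"
    by (rule eventually_mono) (metis le order.trans less_imp_le)
  then show "y \<le> fibre_length i K x + e"
    by (rule tendsto_upperbound[OF Y]) simp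
qed

section \<open>Compression\<close>

lemma nonneg_orthant_subset_PiE: "nonneg_orthant m \<subseteq> PiE {..<m} (\<lambda>_. UNIV)"
  unfolding nonneg_orthant_def by (auto simp: PiE_iff)

lemma closed_nonneg_orthant: "closed (nonneg_orthant m)"
proof -
  have "nonneg_orthant m = (\<Inter>j<m. {w. 0 \<le> w j}) \<inter> (\<Inter>j\<in>- {..<m}. {w. w j = undefined})"
    unfolding nonneg_orthant_def PiE_def extensional_def by auto
  moreover have "closed {w::nat \<Rightarrow> real. 0 \<le> w j}" "closed {w::nat \<Rightarrow> real. w j = c}" for j c
    by (intro closed_Collect_le closed_Collect_eq continuous_on_const continuous_on_product_coordinates)+
  ultimately show ?thesis
    by (simp add: closed_Int closed_INT)
qed

lemma compact_proj_drop: "compact S \<Longrightarrow> compact (proj_drop m j S)"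
  unfolding proj_drop_def
  by (intro compact_continuous_image continuous_on_restrict_comp continuous_on_id)

lemma proj_drop_extensional: "x \<in> proj_drop m j S \<Longrightarrow> x \<in> extensional ({..<m} - {j})"
  unfolding proj_drop_def by auto

lemma proj_drop_subset_PiE: "proj_drop m j S \<subseteq> PiE ({..<m} - {j}) (\<lambda>_. UNIV)"
  unfolding proj_drop_def by (intro image_subsetI) (simp add: restrict_PiE_iff)

lemma restrict_fun_upd_Diff: "x \<in> extensional (N - {i}) \<Longrightarrow> restrict (x(i := y)) (N - {i}) = x"
  by (auto simp: extensional_def fun_eq_iff)

lemma fun_upd_restrict_self: "w \<in> extensional N \<Longrightarrow> (restrict w (N - {i}))(i := w i) = w"
  by (auto simp: extensional_def fun_eq_iff)

lemma fibre_subset_nonneg: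
  assumes "S \<subseteq> nonneg_orthant m" "i < m"
  shows "fibre i S x \<subseteq> {0..}"
proof
  fix y
  assume "y \<in> fibre i S x"
  then have "x(i := y) \<in> PiE {..<m} (\<lambda>_. {0..})"
    using assms(1) by (auto simp: fibre_def nonneg_orthant_def)
  then show "y \<in> {0..}"
    using PiE_mem[of "x(i := y)" "{..<m}" "\<lambda>_. {0..}" i] assms(2) by simp
qed

lemma fibre_eq_empty_iff:
  assumes S: "S \<subseteq> nonneg_orthant m" and x: "x \<in> extensional ({..<m} - {i})"
  shows "fibre i S x = {} \<longleftrightarrow> x \<notin> proj_drop m i S"
proof
  assume "x \<notin> proj_drop m i S"
  moreover have "x \<in> proj_drop m i S" if "y \<in> fibre i S x" for y
  proof -
    have "x(i := y) \<in> S"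
      using that by (simp add: fibre_def)
    then have "restrict (x(i := y)) ({..<m} - {i}) \<in> proj_drop m i S"
      unfolding proj_drop_def by (rule imageI)
    then show ?thesis
      by (simp only: restrict_fun_upd_Diff[OF x])
  qed
  ultimately show "fibre i S x = {}"
    by blast
next
  assume "fibre i S x = {}"
  moreover have "w i \<in> fibre i S (restrict w ({..<m} - {i}))" if "w \<in> S" for w
  proof -
    have "w \<in> PiE {..<m} (\<lambda>_. UNIV)"
      using that S nonneg_orthant_subset_PiE by blast
    then have "w \<in> extensional {..<m}"
      by (simp add: PiE_iff)
    then have "(restrict w ({..<m} - {i}))(i := w i) \<in> S"
      using that by (simp only: fun_upd_restrict_self)
    then show ?thesis
      unfolding fibre_def by (rule CollectI)
  qed
  ultimately show "x \<notin> proj_drop m i S"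
    unfolding proj_drop_def by blast
qed

lemma fun_upd_proj_drop_in_nonneg_orthant:
  assumes "S \<subseteq> nonneg_orthant m" "i < m" "x \<in> proj_drop m i S" "0 \<le> y"
  shows "x(i := y) \<in> nonneg_orthant m"
proof -
  obtain w where "w \<in> PiE {..<m} (\<lambda>_. {0..})" "x = restrict w ({..<m} - {i})"
    using assms(1,3) unfolding proj_drop_def nonneg_orthant_def by blast
  then show ?thesis
    using assms(2,4) unfolding nonneg_orthant_def by (auto simp: PiE_iff extensional_def)
qed

text \<open>The base point of v is its restriction to the coordinates other than i; over each base point
  of S, the fibre is replaced by the interval from 0 to the fibre length.\<close>

definition compression :: "nat \<Rightarrow> nat \<Rightarrow> (nat \<Rightarrow> real) set \<Rightarrow> (nat \<Rightarrow> real) set" where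
  "compression m i S = {v \<in> nonneg_orthant m.
     restrict v ({..<m} - {i}) \<in> proj_drop m i S \<and>
     v i \<le> fibre_length i S (restrict v ({..<m} - {i}))}"

lemma fun_upd_in_compression_iff:
  assumes S: "S \<subseteq> nonneg_orthant m" and i: "i < m" and x: "x \<in> extensional ({..<m} - {i})"
  shows "x(i := y) \<in> compression m i S \<longleftrightarrow>
    x \<in> proj_drop m i S \<and> 0 \<le> y \<and> y \<le> fibre_length i S x"
proof -
  have "0 \<le> y" if "x(i := y) \<in> nonneg_orthant m"
    using that i PiE_mem[of "x(i := y)" "{..<m}" "\<lambda>_. {0..}" i] by (simp add: nonneg_orthant_def)
  then show ?thesis
    using fun_upd_proj_drop_in_nonneg_orthant[OF S i] restrict_fun_upd_Diff[OF x]
    unfolding compression_def by auto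
qed

lemma compressionE:
  assumes "v \<in> compression m i S" "i < m"
  obtains x where "x \<in> proj_drop m i S" "x(i := v i) = v" "0 \<le> v i" "v i \<le> fibre_length i S x"
proof -
  let ?x = "restrict v ({..<m} - {i})"
  have v: "v \<in> PiE {..<m} (\<lambda>_. {0..})"
    using assms(1) by (simp add: compression_def nonneg_orthant_def)
  show ?thesis
  proof (rule that[of ?x])
    show "?x \<in> proj_drop m i S" "v i \<le> fibre_length i S ?x"
      using assms(1) by (simp_all add: compression_def)
    show "?x(i := v i) = v"
      using v by (intro fun_upd_restrict_self) (simp add: PiE_iff)
    show "0 \<le> v i"
      using PiE_mem[OF v, of i] assms(2) by simp
  qed
qed

lemma fibre_compression:
  assumes "S \<subseteq> nonneg_orthant m" "i < m" "x \<in> extensional ({..<m} - {i})"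
  shows "fibre i (compression m i S) x =
    (if x \<in> proj_drop m i S then {0..fibre_length i S x} else {})"
proof (rule set_eqI)
  fix y
  show "y \<in> fibre i (compression m i S) x \<longleftrightarrow> y \<in> (if x \<in> proj_drop m i S then {0..fibre_length i S x} else {})"
    using fun_upd_in_compression_iff[OF assms, of y] by (simp add: fibre_def)
qed

lemma proj_drop_compression:
  assumes S: "S \<subseteq> nonneg_orthant m" and i: "i < m"
  shows "proj_drop m i (compression m i S) = proj_drop m i S"
proof
  show "proj_drop m i (compression m i S) \<subseteq> proj_drop m i S"
    by (auto simp: proj_drop_def compression_def)
  show "proj_drop m i S \<subseteq> proj_drop m i (compression m i S)"
  proof
    fix x
    assume x: "x \<in> proj_drop m i S"
    then have ext: "x \<in> extensional ({..<m} - {i})"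
      by (rule proj_drop_extensional)
    then have "x(i := 0) \<in> compression m i S"
      using fun_upd_in_compression_iff[OF S i] x by (simp add: fibre_length_def)
    then have "restrict (x(i := 0)) ({..<m} - {i}) \<in> proj_drop m i (compression m i S)"
      unfolding proj_drop_def by (rule imageI)
    then show "x \<in> proj_drop m i (compression m i S)"
      by (simp only: restrict_fun_upd_Diff[OF ext])
  qed
qed

lemma closed_compression:
  assumes S: "compact S" "S \<subseteq> nonneg_orthant m" and i: "i < m"
  shows "closed (compression m i S)"
  unfolding closed_sequential_limits
proof (intro allI impI, elim conjE)
  fix v :: "nat \<Rightarrow> nat \<Rightarrow> real" and l
  assume v: "\<forall>n. v n \<in> compression m i S" and l: "v \<longlonglongrightarrow> l"
  let ?r = "\<lambda>w. restrict w ({..<m} - {i})"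
  have rl: "(\<lambda>n. ?r (v n)) \<longlonglongrightarrow> ?r l"
    by (rule continuous_on_tendsto_compose[OF continuous_on_restrict_comp[OF continuous_on_id[of UNIV]] l]) auto
  have il: "(\<lambda>n. v n i) \<longlonglongrightarrow> l i"
    by (rule continuous_on_tendsto_compose[OF continuous_on_product_coordinates l]) auto
  have "l \<in> nonneg_orthant m"
    using closed_nonneg_orthant _ l by (rule closed_sequentially) (use v in \<open>simp add: compression_def\<close>)
  moreover have "?r l \<in> proj_drop m i S"
  proof -
    have "closed (proj_drop m i S)"
      using compact_imp_closed[OF compact_proj_drop[OF S(1)]] .
    moreover have "?r (v n) \<in> proj_drop m i S" for n
      using v by (simp add: compression_def)
    ultimately show ?thesis
      using rl by (rule closed_sequentially)
  qed
  moreover have "l i \<le> fibre_length i S (?r l)"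
    using v by (intro fibre_length_limit_le[OF S(1) rl il]) (simp add: compression_def)
  ultimately show "l \<in> compression m i S"
    unfolding compression_def by blast
qed

lemma compact_compression:
  assumes S: "compact S" "S \<subseteq> nonneg_orthant m" and i: "i < m"
  shows "compact (compression m i S)"
proof -
  let ?R = "measure lborel ((\<lambda>w. w i) ` S)"
  have "compact ((\<lambda>w. w i) ` S)"
    using S(1) by (rule compact_coordinate_image)
  then have bound: "fibre_length i S x \<le> ?R" for x
    by (intro fibre_length_le_measure[OF S(1) fibre_subset_coordinate_image] fmeasurable_compact)
  have sub: "compression m i S \<subseteq> (\<lambda>p. (fst p)(i := snd p)) ` (proj_drop m i S \<times> {0..?R})"
  proof
    fix v
    assume "v \<in> compression m i S"
    then obtain x where "x \<in> proj_drop m i S" "x(i := v i) = v" "0 \<le> v i" "v i \<le> fibre_length i S x"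
      using compressionE[OF _ i] by blast
    with bound[of x] show "v \<in> (\<lambda>p. (fst p)(i := snd p)) ` (proj_drop m i S \<times> {0..?R})"
      by (intro image_eqI[of _ _ "(x, v i)"]) auto
  qed
  moreover have "compact ((\<lambda>p. (fst p)(i := snd p)) ` (proj_drop m i S \<times> {0..?R}))"
  proof (rule compact_continuous_image)
    show "continuous_on (proj_drop m i S \<times> {0..?R}) (\<lambda>p. (fst p)(i := snd p))"
      by (intro continuous_on_fun_upd continuous_on_fst continuous_on_snd continuous_on_id)
    show "compact (proj_drop m i S \<times> {0..?R})"
      using S(1) by (intro compact_Times compact_proj_drop compact_Icc)
  qed
  then have "compact ((\<lambda>p. (fst p)(i := snd p)) ` (proj_drop m i S \<times> {0..?R}) \<inter> compression m i S)"
    using closed_compression[OF S i] by (rule compact_Int_closed)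
  moreover have "(\<lambda>p. (fst p)(i := snd p)) ` (proj_drop m i S \<times> {0..?R}) \<inter> compression m i S = compression m i S"
    using sub by blast
  ultimately show ?thesis
    by simp
qed

lemma compression_subset_down_closed:
  assumes S: "compact S" "S \<subseteq> nonneg_orthant m" and i: "i < m"
    and SA: "S \<subseteq> A" and A: "down_closed m A"
  shows "compression m i S \<subseteq> A"
proof
  fix v
  assume v: "v \<in> compression m i S"
  then obtain x where x: "x \<in> proj_drop m i S" "x(i := v i) = v" "v i \<le> fibre_length i S x"
    using compressionE[OF _ i] by blast
  have "fibre i S x \<noteq> {}"
    using fibre_eq_empty_iff[OF S(2) proj_drop_extensional[OF x(1)]] x(1) by blast
  then obtain s where s: "s \<in> fibre i S x" "\<And>t. t \<in> fibre i S x \<Longrightarrow> t \<le> s"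
    using compact_attains_sup[OF compact_fibre[OF S(1)]] by metis
  have "0 \<le> s"
    using s(1) fibre_subset_nonneg[OF S(2) i] by auto
  have "fibre_length i S x \<le> measure lborel {0..s}"
    using s fibre_subset_nonneg[OF S(2) i]
    by (intro fibre_length_le_measure[OF S(1)] fmeasurable_compact compact_Icc) (auto simp: subset_eq)
  with x(3) \<open>0 \<le> s\<close> have "v i \<le> s"
    by simp
  then have "v j \<le> (x(i := s)) j" for j
    using fun_cong[OF x(2), of j] by (cases "j = i") auto
  moreover have "x(i := s) \<in> A"
    using s(1) SA by (auto simp: fibre_def)
  moreover have "v \<in> nonneg_orthant m"
    using v by (simp add: compression_def)
  ultimately show "v \<in> A"
    using A unfolding down_closed_def by blast
qed

definition down_closed_along :: "nat \<Rightarrow> (nat \<Rightarrow> real) set \<Rightarrow> bool" where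
  "down_closed_along j S \<longleftrightarrow> (\<forall>x\<in>S. \<forall>t. 0 \<le> t \<and> t \<le> x j \<longrightarrow> x(j := t) \<in> S)"

lemma down_closed_along_compression:
  assumes "S \<subseteq> nonneg_orthant m" "i < m"
  shows "down_closed_along i (compression m i S)"
  unfolding down_closed_along_def
proof (intro ballI allI impI)
  fix v t
  assume v: "v \<in> compression m i S" and t: "0 \<le> t \<and> t \<le> v i"
  obtain x where x: "x \<in> proj_drop m i S" "x(i := v i) = v" "v i \<le> fibre_length i S x"
    using compressionE[OF v assms(2)] by blast
  have "x \<in> extensional ({..<m} - {i})"
    using x(1) by (rule proj_drop_extensional)
  moreover have "v(i := t) = x(i := t)"
    by (subst x(2)[symmetric]) simp
  ultimately show "v(i := t) \<in> compression m i S"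
    using fun_upd_in_compression_iff[OF assms] x t by simp
qed

lemma down_closed_along_compression_other:
  assumes S: "compact S" "S \<subseteq> nonneg_orthant m" and i: "i < m" and j: "j < m" "j \<noteq> i"
    and d: "down_closed_along j S"
  shows "down_closed_along j (compression m i S)"
  unfolding down_closed_along_def
proof (intro ballI allI impI)
  fix v t
  assume v: "v \<in> compression m i S" and t: "0 \<le> t \<and> t \<le> v j"
  obtain x where x: "x \<in> proj_drop m i S" "x(i := v i) = v" "0 \<le> v i" "v i \<le> fibre_length i S x"
    using compressionE[OF v i] by blast
  have tx: "t \<le> x j"
    using t fun_cong[OF x(2), of j] j by simp
  have xt: "x(j := t) \<in> proj_drop m i S"
  proof -
    obtain w where w: "w \<in> S" "x = restrict w ({..<m} - {i})"
      using x(1) unfolding proj_drop_def by blast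
    have "x j = w j"
      using w(2) j by simp
    then have "w(j := t) \<in> S"
      using d w(1) t tx unfolding down_closed_along_def by simp
    moreover have "x(j := t) = restrict (w(j := t)) ({..<m} - {i})"
      using w(2) j by (auto simp: fun_eq_iff)
    ultimately show ?thesis
      unfolding proj_drop_def by blast
  qed
  have "fibre i S x \<subseteq> fibre i S (x(j := t))"
    using d t tx j unfolding down_closed_along_def fibre_def by (auto simp: fun_upd_twist)
  then have "fibre_length i S x \<le> fibre_length i S (x(j := t))"
    by (rule fibre_length_mono[OF S(1) S(1)])
  moreover have "v(j := t) = (x(j := t))(i := v i)"
    using j by (subst x(2)[symmetric]) (simp add: fun_upd_twist)
  moreover have "x(j := t) \<in> extensional ({..<m} - {i})"
    using xt by (rule proj_drop_extensional)
  ultimately show "v(j := t) \<in> compression m i S"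
    using fun_upd_in_compression_iff[OF S(2) i] xt x(3,4) by simp
qed

lemma down_closed_if_down_closed_along:
  assumes S: "S \<subseteq> nonneg_orthant m" and d: "\<And>j. j < m \<Longrightarrow> down_closed_along j S"
  shows "down_closed m S"
  unfolding down_closed_def
proof (intro ballI impI)
  fix x y
  assume x: "x \<in> S" and y: "y \<in> nonneg_orthant m" and le: "\<forall>i<m. y i \<le> x i"
  define z where "z n = (\<lambda>j. if j < n then y j else x j)" for n
  have "z n \<in> S" if "n \<le> m" for n
    using that
  proof (induction n)
    case 0
    then show ?case
      using x by (simp add: z_def)
  next
    case (Suc n)
    have "0 \<le> y n"
      using y Suc.prems PiE_mem[of y "{..<m}" "\<lambda>_. {0..}" n] by (simp add: nonneg_orthant_def)
    moreover have "y n \<le> z n n"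
      using le Suc.prems by (simp add: z_def)
    ultimately have "(z n)(n := y n) \<in> S"
      using d[of n] Suc unfolding down_closed_along_def by simp
    moreover have "z (Suc n) = (z n)(n := y n)"
      by (auto simp: z_def fun_eq_iff)
    ultimately show ?case
      by metis
  qed
  moreover have "z m = y"
    using x S y by (auto simp: z_def fun_eq_iff nonneg_orthant_def PiE_iff extensional_def)
  ultimately show "y \<in> S"
    by auto
qed

section \<open>Volumes of compressions\<close>

interpretation lborel_product: product_sigma_finite "\<lambda>_::nat. lborel :: real measure"
  by standard

lemma sets_PiM_lborel_if_borel:
  fixes K :: "(nat \<Rightarrow> real) set"
  assumes "K \<in> sets borel" "K \<subseteq> PiE I (\<lambda>_. UNIV)"
  shows "K \<in> sets (PiM I (\<lambda>_. lborel))"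
proof -
  have "(\<lambda>x. x) \<in> measurable (PiM I (\<lambda>_. lborel)) (PiM UNIV (\<lambda>_. borel))"
  proof (rule measurable_PiM_single')
    fix j :: nat
    show "(\<lambda>x. x j) \<in> borel_measurable (PiM I (\<lambda>_. lborel))"
    proof (cases "j \<in> I")
      case True
      then show ?thesis
        using measurable_component_singleton[OF True, of "\<lambda>_. lborel :: real measure"] by simp
    next
      case False
      then show ?thesis
        by (subst measurable_cong[where g = "\<lambda>_. undefined"]) (auto simp: space_PiM PiE_def extensional_def)
    qed
  qed (auto simp: space_PiM)
  moreover have "K \<in> sets (PiM UNIV (\<lambda>_. borel))"
    using assms(1) sets_PiM_equal_borel by blast
  ultimately have "(\<lambda>x. x) -` K \<inter> space (PiM I (\<lambda>_. lborel)) \<in> sets (PiM I (\<lambda>_. lborel))"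
    by (rule measurable_sets)
  then show ?thesis
    using assms(2) by (simp add: space_PiM Int_absorb2)
qed

lemma emeasure_PiM_lborel_compact_less_top:
  fixes K :: "(nat \<Rightarrow> real) set"
  assumes N: "finite N" and K: "compact K" "K \<subseteq> PiE N (\<lambda>_. UNIV)"
  shows "emeasure (PiM N (\<lambda>_. lborel)) K < \<infinity>"
proof -
  have "compact (\<Union>j\<in>N. (\<lambda>w. w j) ` K)"
    using N K(1) by (intro compact_UN compact_coordinate_image)
  then obtain r where r: "\<And>z. z \<in> (\<Union>j\<in>N. (\<lambda>w. w j) ` K) \<Longrightarrow> norm z \<le> r"
    using compact_imp_bounded bounded_iff by metis
  have "K \<subseteq> PiE N (\<lambda>_. {-r..r})"
    using K(2) r by (force simp: PiE_iff abs_le_iff)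
  then have "emeasure (PiM N (\<lambda>_. lborel)) K \<le> emeasure (PiM N (\<lambda>_. lborel)) (PiE N (\<lambda>_. {-r..r}))"
    using N by (intro emeasure_mono) auto
  also have "\<dots> = (\<Prod>j\<in>N. emeasure lborel {-r..r})"
    using N by (simp add: lborel_product.emeasure_PiM)
  also have "\<dots> < \<infinity>"
    using emeasure_lborel_Icc_eq[of "-r" r] by (simp add: less_top[symmetric] power_eq_top_ennreal)
  finally show ?thesis .
qed

lemma emeasure_PiM_insert_eq_nn_integral_fibre:
  fixes K :: "(nat \<Rightarrow> real) set"
  assumes I: "finite I" "i \<notin> I" and K: "K \<in> sets (PiM (insert i I) (\<lambda>_. lborel))"
  shows "emeasure (PiM (insert i I) (\<lambda>_. lborel)) K =
    (\<integral>\<^sup>+x. emeasure lborel (fibre i K x) \<partial>PiM I (\<lambda>_. lborel))"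
proof -
  have "emeasure (PiM (insert i I) (\<lambda>_. lborel)) K = (\<integral>\<^sup>+x. indicator K x \<partial>PiM (insert i I) (\<lambda>_. lborel))"
    using K by simp
  also have "\<dots> = (\<integral>\<^sup>+x. (\<integral>\<^sup>+y. indicator K (x(i := y)) \<partial>lborel) \<partial>PiM I (\<lambda>_. lborel))"
    using I K by (subst lborel_product.product_nn_integral_insert) auto
  also have "\<dots> = (\<integral>\<^sup>+x. emeasure lborel (fibre i K x) \<partial>PiM I (\<lambda>_. lborel))"
  proof (rule nn_integral_cong)
    fix x :: "nat \<Rightarrow> real"
    assume x: "x \<in> space (PiM I (\<lambda>_. lborel))"
    have "(\<lambda>y. x(i := y)) -` K \<inter> space lborel \<in> sets lborel"
      using measurable_sets[OF measurable_component_update[OF x I(2)] K] .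
    then have "(\<integral>\<^sup>+y. indicator ((\<lambda>y. x(i := y)) -` K \<inter> space lborel) y \<partial>lborel) =
        emeasure lborel (fibre i K x)"
      by (simp add: fibre_def vimage_def)
    then show "(\<integral>\<^sup>+y. indicator K (x(i := y)) \<partial>lborel) = emeasure lborel (fibre i K x)"
      by (simp add: indicator_def)
  qed
  finally show ?thesis .
qed

lemma emeasure_PiM_eq_nn_integral_fibre:
  fixes K :: "(nat \<Rightarrow> real) set"
  assumes "finite N" "i \<in> N" "K \<in> sets (PiM N (\<lambda>_. lborel))"
  shows "emeasure (PiM N (\<lambda>_. lborel)) K =
    (\<integral>\<^sup>+x. emeasure lborel (fibre i K x) \<partial>PiM (N - {i}) (\<lambda>_. lborel))"
  using emeasure_PiM_insert_eq_nn_integral_fibre[of "N - {i}" i K] assms by (simp add: insert_absorb)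

lemma emeasure_compression:
  assumes S: "compact S" "S \<subseteq> nonneg_orthant m" and i: "i < m"
  shows "emeasure (PiM {..<m} (\<lambda>_. lborel)) (compression m i S) = emeasure (PiM {..<m} (\<lambda>_. lborel)) S"
proof -
  let ?I = "{..<m} - {i}"
  have fubini: "emeasure (PiM {..<m} (\<lambda>_. lborel)) T =
      (\<integral>\<^sup>+x. emeasure lborel (fibre i T x) \<partial>PiM ?I (\<lambda>_. lborel))"
    if "compact T" "T \<subseteq> nonneg_orthant m" for T
    using that i nonneg_orthant_subset_PiE
    by (intro emeasure_PiM_eq_nn_integral_fibre sets_PiM_lborel_if_borel borel_compact) auto
  have "emeasure lborel (fibre i (compression m i S) x) = emeasure lborel (fibre i S x)"
    if "x \<in> space (PiM ?I (\<lambda>_. lborel))" for x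
  proof -
    have x: "x \<in> extensional ?I"
      using that by (simp add: space_PiM PiE_def)
    show ?thesis
    proof (cases "x \<in> proj_drop m i S")
      case True
      then show ?thesis
        using fibre_compression[OF S(2) i x] emeasure_fibre[OF S(1)] by (simp add: fibre_length_def)
    next
      case False
      then have "fibre i S x = {}"
        using fibre_eq_empty_iff[OF S(2) x] by blast
      then show ?thesis
        using fibre_compression[OF S(2) i x] False by simp
    qed
  qed
  then show ?thesis
    using fubini[OF compact_compression[OF S i]] fubini[OF S] by (simp add: compression_def cong: nn_integral_cong)
qed

lemma fibre_proj_drop_compression_subset:
  assumes S: "compact S" "S \<subseteq> nonneg_orthant m" and i: "i < m" and j: "j \<noteq> i"
  shows "fibre i (proj_drop m j (compression m i S)) z \<subseteq> {0..fibre_length i (proj_drop m j S) z}"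
proof
  fix y
  assume "y \<in> fibre i (proj_drop m j (compression m i S)) z"
  then obtain v where v: "v \<in> compression m i S" "z(i := y) = restrict v ({..<m} - {j})"
    by (auto simp: fibre_def proj_drop_def)
  obtain x where x: "x \<in> proj_drop m i S" "x(i := v i) = v" "0 \<le> v i" "v i \<le> fibre_length i S x"
    using compressionE[OF v(1) i] by blast
  have y: "y = v i"
    using fun_cong[OF v(2), of i] i j by simp
  have "fibre i S x \<subseteq> fibre i (proj_drop m j S) z"
  proof
    fix t
    assume "t \<in> fibre i S x"
    then have "restrict (x(i := t)) ({..<m} - {j}) \<in> proj_drop m j S"
      by (auto simp: fibre_def proj_drop_def)
    moreover have "restrict (x(i := t)) ({..<m} - {j}) = z(i := t)"
    proof
      fix k
      show "restrict (x(i := t)) ({..<m} - {j}) k = (z(i := t)) k"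
        using fun_cong[OF v(2), of k] fun_cong[OF x(2), of k] i j by (cases "k = i") auto
    qed
    ultimately show "t \<in> fibre i (proj_drop m j S) z"
      by (simp add: fibre_def)
  qed
  then have "fibre_length i S x \<le> fibre_length i (proj_drop m j S) z"
    by (rule fibre_length_mono[OF S(1) compact_proj_drop[OF S(1)]])
  then show "y \<in> {0..fibre_length i (proj_drop m j S) z}"
    using x(3,4) y by simp
qed

lemma lebI_proj_drop_compression_le:
  assumes S: "compact S" "S \<subseteq> nonneg_orthant m" and i: "i < m" and j: "j < m"
  shows "lebI ({..<m} - {j}) (proj_drop m j (compression m i S)) \<le> lebI ({..<m} - {j}) (proj_drop m j S)"
proof (cases "j = i")
  case True
  then show ?thesis
    using proj_drop_compression[OF S(2) i] by simp
next
  case False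
  let ?M = "PiM ({..<m} - {j}) (\<lambda>_. lborel)"
  have fubini: "emeasure ?M (proj_drop m j T) =
      (\<integral>\<^sup>+z. emeasure lborel (fibre i (proj_drop m j T) z) \<partial>PiM ({..<m} - {j} - {i}) (\<lambda>_. lborel))"
    if "compact T" for T
    using that i False
    by (intro emeasure_PiM_eq_nn_integral_fibre sets_PiM_lborel_if_borel borel_compact compact_proj_drop
        proj_drop_subset_PiE) auto
  have "emeasure lborel (fibre i (proj_drop m j (compression m i S)) z) \<le>
      emeasure lborel (fibre i (proj_drop m j S) z)" for z
  proof -
    have "emeasure lborel (fibre i (proj_drop m j (compression m i S)) z) \<le>
        emeasure lborel {0..fibre_length i (proj_drop m j S) z}"
      using fibre_proj_drop_compression_subset[OF S i False] by (intro emeasure_mono) auto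
    then show ?thesis
      using emeasure_fibre[OF compact_proj_drop[OF S(1)]] by (simp add: fibre_length_def)
  qed
  then have "emeasure ?M (proj_drop m j (compression m i S)) \<le> emeasure ?M (proj_drop m j S)"
    using fubini[OF compact_compression[OF S i]] fubini[OF S(1)] by (simp add: nn_integral_mono)
  moreover have "emeasure ?M (proj_drop m j S) < \<infinity>"
    using emeasure_PiM_lborel_compact_less_top[OF _ compact_proj_drop[OF S(1)] proj_drop_subset_PiE]
    by simp
  ultimately show ?thesis
    unfolding lebI_def measure_def by (simp add: enn2real_mono)
qed

lemma deficiency_le_deficiency_compression:
  assumes k: "0 \<le> k" and S: "compact S" "S \<subseteq> nonneg_orthant m" and i: "i < m"
  shows "deficiency k m S \<le> deficiency k m (compression m i S)"
proof -
  have "lebI {..<m} (compression m i S) = lebI {..<m} S"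
    unfolding lebI_def measure_def by (simp add: emeasure_compression[OF S i])
  moreover have "(\<Sum>j<m. lebI ({..<m} - {j}) (proj_drop m j (compression m i S))) \<le>
      (\<Sum>j<m. lebI ({..<m} - {j}) (proj_drop m j S))"
    by (intro sum_mono lebI_proj_drop_compression_le[OF S i]) simp
  ultimately show ?thesis
    unfolding deficiency_def using k by (simp add: mult_left_mono)
qed

lemma body_compression:
  assumes "body m S" "i < m"
  shows "body m (compression m i S)"
proof -
  have "compression m i S \<subseteq> nonneg_orthant m"
    unfolding compression_def by blast
  then show ?thesis
    using assms compact_compression[of S m i] unfolding body_def by blast
qed

section \<open>Compressing along every coordinate\<close>

primrec compressions :: "nat \<Rightarrow> nat \<Rightarrow> (nat \<Rightarrow> real) set \<Rightarrow> (nat \<Rightarrow> real) set" where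
  "compressions m 0 B = B"
| "compressions m (Suc n) B = compression m n (compressions m n B)"

lemma body_compressions:
  assumes "body m B" "n \<le> m"
  shows "body m (compressions m n B)"
  using assms(2)
proof (induction n)
  case (Suc n)
  then have "body m (compressions m n B)"
    by simp
  then show ?case
    using body_compression Suc.prems by simp
qed (simp add: assms(1))

lemma compressions_subset_down_closed:
  assumes "body m B" "B \<subseteq> A" "down_closed m A" "n \<le> m"
  shows "compressions m n B \<subseteq> A"
  using assms(4)
proof (induction n)
  case (Suc n)
  have "compact (compressions m n B)" "compressions m n B \<subseteq> nonneg_orthant m"
    using body_compressions[OF assms(1), of n] Suc.prems by (simp_all add: body_def)
  moreover have "compressions m n B \<subseteq> A"
    using Suc by simp
  ultimately show ?case
    using compression_subset_down_closed[OF _ _ _ _ assms(3)] Suc.prems by simp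
qed (simp add: assms(2))

lemma down_closed_along_compressions:
  assumes "body m B" "n \<le> m" "j < n"
  shows "down_closed_along j (compressions m n B)"
  using assms(2,3)
proof (induction n)
  case (Suc n)
  then have S: "compact (compressions m n B)" "compressions m n B \<subseteq> nonneg_orthant m"
    using body_compressions[OF assms(1), of n] by (simp_all add: body_def)
  show ?case
  proof (cases "j = n")
    case True
    then show ?thesis
      using down_closed_along_compression[OF S(2)] Suc.prems by simp
  next
    case False
    then show ?thesis
      using down_closed_along_compression_other[OF S _ _ False] Suc by simp
  qed
qed simp

lemma deficiency_le_deficiency_compressions:
  assumes "0 \<le> k" "body m B" "n \<le> m"
  shows "deficiency k m B \<le> deficiency k m (compressions m n B)"
  using assms(3)
proof (induction n)
  case (Suc n)
  then show ?case
    using body_compressions[OF assms(2), of n]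
      deficiency_le_deficiency_compression[OF assms(1), of "compressions m n B" m n]
    by (simp add: body_def)
qed simp

theorem lemma5:
  fixes k :: real and m :: nat and A B :: "(nat \<Rightarrow> real) set"
  assumes "k > 0"
    and "body m A" and "body m B" and "B \<subseteq> A" and "down_closed m A"
  shows "\<exists>B'. body m B' \<and> down_closed m B' \<and> B' \<subseteq> A \<and>
           deficiency k m B' \<ge> deficiency k m B"
proof (intro exI conjI)
  let ?B' = "compressions m m B"
  show "body m ?B'"
    using body_compressions[OF assms(3)] by simp
  then show "down_closed m ?B'"
    using down_closed_along_compressions[OF assms(3)]
    by (intro down_closed_if_down_closed_along) (auto simp: body_def)
  show "?B' \<subseteq> A"
    using compressions_subset_down_closed[OF assms(3-5)] by simp
  show "deficiency k m B \<le> deficiency k m ?B'"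
    using deficiency_le_deficiency_compressions[OF _ assms(3)] assms(1) by simp
qed

end
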